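(* Fix a state $s$, a receiver utility $u:\mathcal S\times\Omega\times\mathcal A\to[0,1]$, a function $Q:\mathcal S\times\Omega\times\mathcal A\to[0,H]$ and a prior $\mu\in\Delta(\Omega)$ that is $(p_0,D)$-regular at $s$, i.e. $\Pr_{\omega\sim\mu}[\omega\in\mathcal W_{s,a}(D)]\ge p_0$ for every $a\in\mathcal A$. Then for every $\epsilon>0$, $$\mathrm{Gap}\big(s,\mu,\mathbb B(\mu,\epsilon);Q\big)\le\frac{H\epsilon}{p_0D}.$$
   Context: $\mathcal A$ is a finite action set, $\mathcal S$ a state space and $\Omega$ an outcome space; $\Delta(\Omega)$ is the set of probability distributions on $\Omega$ (with densities/mass functions $\mu(\omega)$), and $\|\mu-\mu'\|_1=\int_\Omega|\mu(\omega)-\mu'(\omega)|\,\mathrm d\omega$. A signaling scheme $\pi$ assigns to each $(s,\omega)$ a distribution $\pi(\cdot\mid s,\omega)\in\Delta(\mathcal A)$. For a prior $\mu$ and utility $u$, $\mathrm{Pers}(\mu,u)$ is the set of $\pi$ with $\int_\Omega\mu(\omega)\pi(a\mid s,\omega)[u(s,\omega,a)-u(s,\omega,a')]\,\mathrm d\omega\ge0$ for all $a,a'\in\mathcal A$ and states $s$; for a set $\mathcal B\subseteq\Delta(\Omega)$, $\mathrm{Pers}(\mathcal B,u)=\bigcap_{\mu'\in\mathcal B}\mathrm{Pers}(\mu',u)$. $\langle Q,\mu\otimes\pi\rangle(s)=\mathbb E_{\omega\sim\mu,\,a\sim\pi(\cdot\mid s,\omega)}[Q(s,\omega,a)]$.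 The robustness gap is $\mathrm{Gap}(s,\mu,\mathcal B;Q)=\max_{\pi\in\mathrm{Pers}(\mu,u)}\langle Q,\mu\otimes\pi\rangle(s)-\max_{\pi\in\mathrm{Pers}(\mathcal B,u)}\langle Q,\mu\otimes\pi\rangle(s)$. $\mathbb B(\mu,\epsilon)=\{\mu'\in\Delta(\Omega):\|\mu-\mu'\|_1\le\epsilon\}$. $\mathcal W_{s,a}(D)=\{\omega:u(s,\omega,a)-u(s,\omega,a')\ge D\ \forall a'\in\mathcal A\setminus\{a\}\}$. *)

theory Defs
  imports "HOL-Analysis.Analysis"
begin

text \<open>Outcome space: a measure space M (base measure, e.g. counting or Lebesgue).
  Priors are densities w.r.t. M. Actions: a finite type 'a. States: type 's.\<close>

definition priors :: "'w measure \<Rightarrow> ('w \<Rightarrow> real) set" where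
  "priors M = {\<mu>. \<mu> \<in> borel_measurable M \<and> (\<forall>\<omega>\<in>space M. 0 \<le> \<mu> \<omega>)
              \<and> integrable M \<mu> \<and> (\<integral>\<omega>. \<mu> \<omega> \<partial>M) = 1}"

definition l1dist :: "'w measure \<Rightarrow> ('w \<Rightarrow> real) \<Rightarrow> ('w \<Rightarrow> real) \<Rightarrow> real" where
  "l1dist M \<mu> \<mu>' = (\<integral>\<omega>. \<bar>\<mu> \<omega> - \<mu>' \<omega>\<bar> \<partial>M)"

definition l1ball :: "'w measure \<Rightarrow> ('w \<Rightarrow> real) \<Rightarrow> real \<Rightarrow> ('w \<Rightarrow> real) set" where
  "l1ball M \<mu> \<epsilon> = {\<mu>' \<in> priors M. l1dist M \<mu> \<mu>' \<le> \<epsilon>}"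

text \<open>Signaling schemes: pi s w a = probability of recommending a in state s, outcome w;
  a distribution on the finite action set, measurable in the outcome.\<close>
definition schemes :: "'w measure \<Rightarrow> ('s \<Rightarrow> 'w \<Rightarrow> 'a::finite \<Rightarrow> real) set" where
  "schemes M = {\<pi>. \<forall>s. (\<forall>a. (\<lambda>\<omega>. \<pi> s \<omega> a) \<in> borel_measurable M)
      \<and> (\<forall>\<omega>\<in>space M. (\<forall>a. 0 \<le> \<pi> s \<omega> a) \<and> (\<Sum>a\<in>UNIV. \<pi> s \<omega> a) = 1)}"

definition Pers :: "'w measure \<Rightarrow> ('w \<Rightarrow> real) \<Rightarrow> ('s \<Rightarrow> 'w \<Rightarrow> 'a::finite \<Rightarrow> real)
    \<Rightarrow> ('s \<Rightarrow> 'w \<Rightarrow> 'a \<Rightarrow> real) set" where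
  "Pers M \<mu> u = {\<pi> \<in> schemes M. \<forall>s a a'.
      (\<integral>\<omega>. \<mu> \<omega> * \<pi> s \<omega> a * (u s \<omega> a - u s \<omega> a') \<partial>M) \<ge> 0}"

definition PersSet :: "'w measure \<Rightarrow> ('w \<Rightarrow> real) set \<Rightarrow> ('s \<Rightarrow> 'w \<Rightarrow> 'a::finite \<Rightarrow> real)
    \<Rightarrow> ('s \<Rightarrow> 'w \<Rightarrow> 'a \<Rightarrow> real) set" where
  "PersSet M B u = {\<pi> \<in> schemes M. \<forall>\<mu>'\<in>B. \<pi> \<in> Pers M \<mu>' u}"

definition pairing :: "'w measure \<Rightarrow> ('s \<Rightarrow> 'w \<Rightarrow> 'a::finite \<Rightarrow> real) \<Rightarrow> ('w \<Rightarrow> real)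
    \<Rightarrow> ('s \<Rightarrow> 'w \<Rightarrow> 'a \<Rightarrow> real) \<Rightarrow> 's \<Rightarrow> real" where
  "pairing M Q \<mu> \<pi> s = (\<integral>\<omega>. \<mu> \<omega> * (\<Sum>a\<in>UNIV. \<pi> s \<omega> a * Q s \<omega> a) \<partial>M)"

definition Gap :: "'w measure \<Rightarrow> ('s \<Rightarrow> 'w \<Rightarrow> 'a::finite \<Rightarrow> real) \<Rightarrow> 's \<Rightarrow> ('w \<Rightarrow> real)
    \<Rightarrow> ('w \<Rightarrow> real) set \<Rightarrow> ('s \<Rightarrow> 'w \<Rightarrow> 'a \<Rightarrow> real) \<Rightarrow> real" where
  "Gap M u s \<mu> B Q =
     (SUP \<pi>\<in>Pers M \<mu> u. pairing M Q \<mu> \<pi> s) - (SUP \<pi>\<in>PersSet M B u. pairing M Q \<mu> \<pi> s)"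

definition Wset :: "'w measure \<Rightarrow> ('s \<Rightarrow> 'w \<Rightarrow> 'a \<Rightarrow> real) \<Rightarrow> 's \<Rightarrow> 'a \<Rightarrow> real \<Rightarrow> 'w set" where
  "Wset M u s a D = {\<omega> \<in> space M. \<forall>a'. a' \<noteq> a \<longrightarrow> u s \<omega> a - u s \<omega> a' \<ge> D}"

definition regular :: "'w measure \<Rightarrow> ('s \<Rightarrow> 'w \<Rightarrow> 'a \<Rightarrow> real) \<Rightarrow> ('w \<Rightarrow> real) \<Rightarrow> 's
    \<Rightarrow> real \<Rightarrow> real \<Rightarrow> bool" where
  "regular M u \<mu> s p0 D = (\<forall>a. (\<integral>\<omega>. \<mu> \<omega> * indicator (Wset M u s a D) \<omega> \<partial>M) \<ge> p0)"

end

theory Submission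
  imports Defs
begin

(*
  Let \<sigma> recommend, in every state and outcome, a uniformly chosen maximiser of u.  Its obedience
  integrands are pointwise nonnegative, so \<sigma> is persuasive under every prior.  Given \<pi> persuasive
  for \<mu>, play (1 - \<delta>) \<pi> + \<delta> \<sigma> in state s (and \<sigma> elsewhere), with \<delta> = \<epsilon> / (p0 D).  Passing from \<mu> to a prior \<mu>'
  at L1-distance d \<le> \<epsilon> changes each obedience integral by at most d, so the \<pi>-part loses at most
  (1 - \<delta>) d.  On W_{s,a}(D), which has \<mu>'-mass at least p0 - d, \<sigma> recommends a with margin D, so
  the \<sigma>-part gains at least \<delta> D (p0 - d); as d \<le> \<delta> D p0 and D \<le> 1, the gain covers the loss.  The mixture costs the
  sender at most \<delta> H, and for \<epsilon> \<ge> p0 D the scheme \<sigma> alone does the job.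
*)

lemma cSUP_diff_le:
  fixes f g :: "'x \<Rightarrow> real"
  assumes "A \<noteq> {}" "bdd_above (g ` B)" "\<And>x. x \<in> A \<Longrightarrow> \<exists>y\<in>B. f x \<le> g y + c"
  shows "(SUP x\<in>A. f x) - (SUP y\<in>B. g y) \<le> c"
proof -
  have "(SUP x\<in>A. f x) \<le> (SUP y\<in>B. g y) + c"
  proof (rule cSUP_least[OF assms(1)])
    fix x
    assume "x \<in> A"
    then obtain y where "y \<in> B" "f x \<le> g y + c"
      using assms(3) by blast
    moreover have "g y \<le> (SUP y\<in>B. g y)"
      using \<open>y \<in> B\<close> assms(2) by (rule cSUP_upper)
    ultimately show "f x \<le> (SUP y\<in>B. g y) + c"
      by linarith
  qed
  then show ?thesis by simp
qed

lemma integrable_prior_mult: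
  assumes "\<mu> \<in> priors M" "f \<in> borel_measurable M"
    and "\<And>\<omega>. \<omega> \<in> space M \<Longrightarrow> \<bar>f \<omega>\<bar> \<le> C"
  shows "integrable M (\<lambda>\<omega>. \<mu> \<omega> * f \<omega>)"
proof (rule Bochner_Integration.integrable_bound[of M "\<lambda>\<omega>. C * \<mu> \<omega>"])
  show "integrable M (\<lambda>\<omega>. C * \<mu> \<omega>)" "(\<lambda>\<omega>. \<mu> \<omega> * f \<omega>) \<in> borel_measurable M"
    using assms(1,2) by (auto simp: priors_def)
  have "\<bar>\<mu> \<omega> * f \<omega>\<bar> \<le> \<bar>C * \<mu> \<omega>\<bar>" if "\<omega> \<in> space M" for \<omega>
  proof -
    have \<mu>_nonneg: "0 \<le> \<mu> \<omega>"
      using assms(1) that by (auto simp: priors_def)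
    then have "\<mu> \<omega> * \<bar>f \<omega>\<bar> \<le> \<mu> \<omega> * \<bar>C\<bar>"
      using assms(3)[OF that] by (intro mult_left_mono) auto
    then show ?thesis
      using \<mu>_nonneg by (simp add: abs_mult mult.commute)
  qed
  then show "AE \<omega> in M. norm (\<mu> \<omega> * f \<omega>) \<le> norm (C * \<mu> \<omega>)"
    by (auto intro: AE_I2)
qed

lemma integral_prior_mult_ge_l1dist:
  assumes \<mu>: "\<mu> \<in> priors M" and \<mu>': "\<mu>' \<in> priors M" and f: "f \<in> borel_measurable M"
    and f_bound: "\<And>\<omega>. \<omega> \<in> space M \<Longrightarrow> \<bar>f \<omega>\<bar> \<le> 1"
  shows "(\<integral>\<omega>. \<mu>' \<omega> * f \<omega> \<partial>M) \<ge> (\<integral>\<omega>. \<mu> \<omega> * f \<omega> \<partial>M) - l1dist M \<mu> \<mu>'"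
proof -
  have int: "integrable M (\<lambda>\<omega>. \<mu> \<omega> * f \<omega>)" "integrable M (\<lambda>\<omega>. \<mu>' \<omega> * f \<omega>)"
    using integrable_prior_mult[OF _ f f_bound] \<mu> \<mu>' by auto
  have "integrable M \<mu>" "integrable M \<mu>'"
    using \<mu> \<mu>' by (auto simp: priors_def)
  then have int_abs: "integrable M (\<lambda>\<omega>. \<bar>\<mu> \<omega> - \<mu>' \<omega>\<bar>)"
    by auto
  have pointwise: "\<mu> \<omega> * f \<omega> - \<mu>' \<omega> * f \<omega> \<le> \<bar>\<mu> \<omega> - \<mu>' \<omega>\<bar>" if "\<omega> \<in> space M" for \<omega>
  proof -
    have "\<mu> \<omega> * f \<omega> - \<mu>' \<omega> * f \<omega> \<le> \<bar>(\<mu> \<omega> - \<mu>' \<omega>) * f \<omega>\<bar>"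
      by (simp add: algebra_simps)
    also have "\<dots> \<le> \<bar>\<mu> \<omega> - \<mu>' \<omega>\<bar>"
      using f_bound[OF that] by (simp add: abs_mult mult_left_le)
    finally show ?thesis .
  qed
  have "(\<integral>\<omega>. \<mu> \<omega> * f \<omega> \<partial>M) - (\<integral>\<omega>. \<mu>' \<omega> * f \<omega> \<partial>M)
      = (\<integral>\<omega>. \<mu> \<omega> * f \<omega> - \<mu>' \<omega> * f \<omega> \<partial>M)"
    using int by simp
  also have "\<dots> \<le> l1dist M \<mu> \<mu>'"
    unfolding l1dist_def using int int_abs pointwise by (intro integral_mono) auto
  finally show ?thesis by simp
qed

definition best_responses :: "('s \<Rightarrow> 'w \<Rightarrow> 'a::finite \<Rightarrow> real) \<Rightarrow> 's \<Rightarrow> 'w \<Rightarrow> 'a set" where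
  "best_responses u s \<omega> = {b. \<forall>c. u s \<omega> c \<le> u s \<omega> b}"

definition best_response_scheme :: "('s \<Rightarrow> 'w \<Rightarrow> 'a::finite \<Rightarrow> real) \<Rightarrow> 's \<Rightarrow> 'w \<Rightarrow> 'a \<Rightarrow> real" where
  "best_response_scheme u s \<omega> b =
     indicator (best_responses u s \<omega>) b / card (best_responses u s \<omega>)"

lemma best_responses_nonempty: "best_responses u s \<omega> \<noteq> {}"
proof -
  have "Max (range (u s \<omega>)) \<in> range (u s \<omega>)"
    by (rule Max_in) auto
  then obtain b where "u s \<omega> b = Max (range (u s \<omega>))"
    by (metis imageE)
  then have "b \<in> best_responses u s \<omega>"
    by (simp add: best_responses_def)
  then show ?thesis by blast
qed

lemma best_response_scheme_measurable:
  fixes u :: "'s \<Rightarrow> 'w \<Rightarrow> 'a::finite \<Rightarrow> real"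
  assumes [measurable]: "\<And>s a. (\<lambda>\<omega>. u s \<omega> a) \<in> borel_measurable M"
  shows "(\<lambda>\<omega>. best_response_scheme u s \<omega> b) \<in> borel_measurable M"
proof -
  have "best_response_scheme u s \<omega> b =
      of_bool (\<forall>c. u s \<omega> c \<le> u s \<omega> b) / (\<Sum>c\<in>UNIV. of_bool (\<forall>d. u s \<omega> d \<le> u s \<omega> c))"
    for \<omega>
    by (simp add: best_response_scheme_def best_responses_def indicator_def)
  moreover have "(\<lambda>\<omega>. of_bool (\<forall>c. u s \<omega> c \<le> u s \<omega> b) /
      (\<Sum>c\<in>UNIV. of_bool (\<forall>d. u s \<omega> d \<le> u s \<omega> c)) :: real) \<in> borel_measurable M"
    by measurable
  ultimately show ?thesis by simp
qed

lemma best_response_scheme_in_schemes: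
  assumes "\<And>s a. (\<lambda>\<omega>. u s \<omega> a) \<in> borel_measurable M"
  shows "best_response_scheme u \<in> schemes M"
proof -
  have "(\<Sum>b\<in>UNIV. best_response_scheme u s \<omega> b) = 1" for s \<omega>
    using best_responses_nonempty[of u s \<omega>]
    by (simp add: best_response_scheme_def sum_divide_distrib[symmetric] indicator_def)
  then show ?thesis
    using best_response_scheme_measurable[OF assms]
    by (auto simp: schemes_def best_response_scheme_def)
qed

lemma best_response_scheme_obedient:
  "best_response_scheme u s \<omega> b * (u s \<omega> b - u s \<omega> c) \<ge> 0"
  by (auto simp: best_response_scheme_def best_responses_def indicator_def)

lemma best_response_scheme_on_Wset:
  assumes "D > 0" "\<omega> \<in> Wset M u s a D"
  shows "best_response_scheme u s \<omega> a = 1"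
proof -
  have less: "u s \<omega> c < u s \<omega> a" if "c \<noteq> a" for c
    using assms that by (force simp: Wset_def)
  have "best_responses u s \<omega> = {a}"
  proof (intro equalityI subsetI)
    fix b
    assume "b \<in> best_responses u s \<omega>"
    then have "u s \<omega> a \<le> u s \<omega> b"
      by (simp add: best_responses_def)
    then show "b \<in> {a}"
      using less[of b] by (cases "b = a") auto
  next
    have "u s \<omega> c \<le> u s \<omega> a" for c
      using less[of c] by (cases "c = a") auto
    then show "b \<in> best_responses u s \<omega>" if "b \<in> {a}" for b
      using that by (simp add: best_responses_def)
  qed
  then show ?thesis
    by (simp add: best_response_scheme_def)
qed

definition obedience ::
    "'w measure \<Rightarrow> ('w \<Rightarrow> real) \<Rightarrow> ('s \<Rightarrow> 'w \<Rightarrow> 'a \<Rightarrow> real) \<Rightarrow> ('s \<Rightarrow> 'w \<Rightarrow> 'a \<Rightarrow> real)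
      \<Rightarrow> 's \<Rightarrow> 'a \<Rightarrow> 'a \<Rightarrow> real" where
  "obedience M \<mu> u \<pi> s a a' = (\<integral>\<omega>. \<mu> \<omega> * \<pi> s \<omega> a * (u s \<omega> a - u s \<omega> a') \<partial>M)"

lemma Pers_iff_obedience:
  "\<pi> \<in> Pers M \<mu> u \<longleftrightarrow> \<pi> \<in> schemes M \<and> (\<forall>s a a'. obedience M \<mu> u \<pi> s a a' \<ge> 0)"
  by (simp add: Pers_def obedience_def)

lemma best_response_scheme_in_Pers:
  assumes "\<And>s a. (\<lambda>\<omega>. u s \<omega> a) \<in> borel_measurable M" "\<mu> \<in> priors M"
  shows "best_response_scheme u \<in> Pers M \<mu> u"
proof -
  have "obedience M \<mu> u (best_response_scheme u) s a a' \<ge> 0" for s a a'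
    unfolding obedience_def using assms(2)
    by (intro Bochner_Integration.integral_nonneg)
      (auto simp: priors_def mult.assoc intro!: mult_nonneg_nonneg best_response_scheme_obedient)
  then show ?thesis
    using best_response_scheme_in_schemes[OF assms(1)] by (simp add: Pers_iff_obedience)
qed

lemma scheme_le_one:
  assumes "\<pi> \<in> schemes M" "\<omega> \<in> space M"
  shows "0 \<le> \<pi> s \<omega> a \<and> \<pi> s \<omega> a \<le> 1"
proof -
  have "\<forall>b. 0 \<le> \<pi> s \<omega> b" and "(\<Sum>b\<in>UNIV. \<pi> s \<omega> b) = 1"
    using assms by (auto simp: schemes_def)
  moreover from this have "\<pi> s \<omega> a \<le> (\<Sum>b\<in>UNIV. \<pi> s \<omega> b)"
    by (intro member_le_sum) auto
  ultimately show ?thesis by auto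
qed

lemma scheme_average_bounds:
  assumes "\<pi> \<in> schemes M" "\<omega> \<in> space M" "\<And>a. 0 \<le> q a \<and> q a \<le> H"
  shows "0 \<le> (\<Sum>a\<in>UNIV. \<pi> s \<omega> a * q a) \<and> (\<Sum>a\<in>UNIV. \<pi> s \<omega> a * q a) \<le> H"
proof -
  have nonneg: "\<And>a. 0 \<le> \<pi> s \<omega> a" and total: "(\<Sum>a\<in>UNIV. \<pi> s \<omega> a) = 1"
    using assms(1,2) by (auto simp: schemes_def)
  have "(\<Sum>a\<in>UNIV. \<pi> s \<omega> a * q a) \<le> (\<Sum>a\<in>UNIV. \<pi> s \<omega> a * H)"
    using nonneg assms(3) by (intro sum_mono mult_left_mono) auto
  also have "\<dots> = H"
    using total by (simp add: sum_distrib_right[symmetric])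
  finally show ?thesis
    using nonneg assms(3) by (auto intro: sum_nonneg)
qed

definition mix_at :: "'s \<Rightarrow> real \<Rightarrow> ('s \<Rightarrow> 'w \<Rightarrow> 'a \<Rightarrow> real) \<Rightarrow> ('s \<Rightarrow> 'w \<Rightarrow> 'a \<Rightarrow> real)
    \<Rightarrow> 's \<Rightarrow> 'w \<Rightarrow> 'a \<Rightarrow> real" where
  "mix_at s \<delta> \<pi> \<sigma> = (\<lambda>s' \<omega> a. if s' = s then (1 - \<delta>) * \<pi> s \<omega> a + \<delta> * \<sigma> s \<omega> a else \<sigma> s' \<omega> a)"

lemma mix_at_in_schemes:
  assumes "\<pi> \<in> schemes M" "\<sigma> \<in> schemes M" "0 \<le> \<delta>" "\<delta> \<le> 1"
  shows "mix_at s \<delta> \<pi> \<sigma> \<in> schemes M"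
proof -
  have "(\<lambda>\<omega>. mix_at s \<delta> \<pi> \<sigma> s' \<omega> a) \<in> borel_measurable M" for s' a
    using assms(1,2) by (cases "s' = s")
      (auto simp: schemes_def mix_at_def intro!: borel_measurable_add borel_measurable_times)
  moreover have "0 \<le> mix_at s \<delta> \<pi> \<sigma> s' \<omega> a \<and> (\<Sum>a\<in>UNIV. mix_at s \<delta> \<pi> \<sigma> s' \<omega> a) = 1"
    if "\<omega> \<in> space M" for s' \<omega> a
  proof (cases "s' = s")
    case True
    have "(\<Sum>a\<in>UNIV. (1 - \<delta>) * \<pi> s \<omega> a + \<delta> * \<sigma> s \<omega> a) = 1"
      using assms(1,2) that by (simp add: schemes_def sum.distrib sum_distrib_left[symmetric])
    then show ?thesis
      using True assms that by (simp add: schemes_def mix_at_def)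
  next
    case False
    then show ?thesis
      using assms(2) that by (simp add: schemes_def mix_at_def)
  qed
  ultimately show ?thesis
    by (simp add: schemes_def)
qed

context
  fixes M :: "'w measure" and Q :: "'s \<Rightarrow> 'w \<Rightarrow> 'a::finite \<Rightarrow> real" and H :: real
  assumes Q_meas: "\<And>s a. (\<lambda>\<omega>. Q s \<omega> a) \<in> borel_measurable M"
    and Q_range: "\<And>s \<omega> a. \<omega> \<in> space M \<Longrightarrow> 0 \<le> Q s \<omega> a \<and> Q s \<omega> a \<le> H"
begin

lemma integrable_pairing_integrand:
  assumes "\<pi> \<in> schemes M" "\<mu> \<in> priors M"
  shows "integrable M (\<lambda>\<omega>. \<mu> \<omega> * (\<Sum>a\<in>UNIV. \<pi> s \<omega> a * Q s \<omega> a))"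
proof (rule integrable_prior_mult[OF assms(2)])
  show "(\<lambda>\<omega>. \<Sum>a\<in>UNIV. \<pi> s \<omega> a * Q s \<omega> a) \<in> borel_measurable M"
    using assms(1) Q_meas by (auto simp: schemes_def intro!: borel_measurable_sum borel_measurable_times)
  show "\<bar>\<Sum>a\<in>UNIV. \<pi> s \<omega> a * Q s \<omega> a\<bar> \<le> H" if "\<omega> \<in> space M" for \<omega>
    using scheme_average_bounds[OF assms(1) that Q_range[OF that]] by simp
qed

lemma pairing_bounds:
  assumes "\<pi> \<in> schemes M" "\<mu> \<in> priors M"
  shows "0 \<le> pairing M Q \<mu> \<pi> s \<and> pairing M Q \<mu> \<pi> s \<le> H"
proof -
  have \<mu>: "integrable M \<mu>" "(\<integral>\<omega>. \<mu> \<omega> \<partial>M) = 1" "\<And>\<omega>. \<omega> \<in> space M \<Longrightarrow> 0 \<le> \<mu> \<omega>"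
    using assms(2) by (auto simp: priors_def)
  have avg: "0 \<le> (\<Sum>a\<in>UNIV. \<pi> s \<omega> a * Q s \<omega> a) \<and> (\<Sum>a\<in>UNIV. \<pi> s \<omega> a * Q s \<omega> a) \<le> H"
    if "\<omega> \<in> space M" for \<omega>
    using scheme_average_bounds[OF assms(1) that Q_range[OF that]] .
  have "pairing M Q \<mu> \<pi> s \<le> (\<integral>\<omega>. H * \<mu> \<omega> \<partial>M)"
    unfolding pairing_def
  proof (rule integral_mono[OF integrable_pairing_integrand[OF assms]])
    show "integrable M (\<lambda>\<omega>. H * \<mu> \<omega>)"
      using \<mu>(1) by simp
    show "\<mu> \<omega> * (\<Sum>a\<in>UNIV. \<pi> s \<omega> a * Q s \<omega> a) \<le> H * \<mu> \<omega>" if "\<omega> \<in> space M" for \<omega>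
      using avg[OF that] \<mu>(3)[OF that] by (metis mult.commute mult_right_mono)
  qed
  moreover have "0 \<le> pairing M Q \<mu> \<pi> s"
    unfolding pairing_def using \<mu>(3) avg by (intro Bochner_Integration.integral_nonneg) auto
  ultimately show ?thesis
    using \<mu>(2) by simp
qed

lemma pairing_mix_at:
  assumes "\<pi> \<in> schemes M" "\<sigma> \<in> schemes M" "\<mu> \<in> priors M"
  shows "pairing M Q \<mu> (mix_at s \<delta> \<pi> \<sigma>) s = (1 - \<delta>) * pairing M Q \<mu> \<pi> s + \<delta> * pairing M Q \<mu> \<sigma> s"
proof -
  have "(\<Sum>a\<in>UNIV. mix_at s \<delta> \<pi> \<sigma> s \<omega> a * Q s \<omega> a)
      = (\<Sum>a\<in>UNIV. (1 - \<delta>) * (\<pi> s \<omega> a * Q s \<omega> a) + \<delta> * (\<sigma> s \<omega> a * Q s \<omega> a))" for \<omega>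
    by (simp add: mix_at_def distrib_right mult.assoc)
  then have "\<mu> \<omega> * (\<Sum>a\<in>UNIV. mix_at s \<delta> \<pi> \<sigma> s \<omega> a * Q s \<omega> a)
      = (1 - \<delta>) * (\<mu> \<omega> * (\<Sum>a\<in>UNIV. \<pi> s \<omega> a * Q s \<omega> a))
        + \<delta> * (\<mu> \<omega> * (\<Sum>a\<in>UNIV. \<sigma> s \<omega> a * Q s \<omega> a))" for \<omega>
    by (simp only: sum.distrib sum_distrib_left[symmetric] distrib_left mult.left_commute)
  then show ?thesis
    unfolding pairing_def
    using integrable_pairing_integrand[OF assms(1,3)] integrable_pairing_integrand[OF assms(2,3)]
    by simp
qed

end

context
  fixes M :: "'w measure" and u :: "'s \<Rightarrow> 'w \<Rightarrow> 'a::finite \<Rightarrow> real"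
  assumes u_meas [measurable]: "\<And>s a. (\<lambda>\<omega>. u s \<omega> a) \<in> borel_measurable M"
    and u_range: "\<And>s \<omega> a. \<omega> \<in> space M \<Longrightarrow> 0 \<le> u s \<omega> a \<and> u s \<omega> a \<le> 1"
begin

lemma Wset_in_sets: "Wset M u s a D \<in> sets M"
  unfolding Wset_def by measurable

lemma obedience_integrand_measurable:
  assumes "\<pi> \<in> schemes M"
  shows "(\<lambda>\<omega>. \<pi> s \<omega> a * (u s \<omega> a - u s \<omega> a')) \<in> borel_measurable M"
proof -
  have [measurable]: "(\<lambda>\<omega>. \<pi> s \<omega> a) \<in> borel_measurable M"
    using assms by (simp add: schemes_def)
  show ?thesis by measurable
qed

lemma obedience_integrand_bounded:
  assumes "\<pi> \<in> schemes M" "\<omega> \<in> space M"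
  shows "\<bar>\<pi> s \<omega> a * (u s \<omega> a - u s \<omega> a')\<bar> \<le> 1"
proof -
  have "\<bar>u s \<omega> a - u s \<omega> a'\<bar> \<le> 1"
    using u_range[OF assms(2), of s a] u_range[OF assms(2), of s a'] by (simp add: abs_le_iff)
  then show ?thesis
    using scheme_le_one[OF assms, of s a] by (simp add: abs_mult mult_le_one)
qed

lemma integrable_obedience_integrand:
  assumes "\<pi> \<in> schemes M" "\<mu> \<in> priors M"
  shows "integrable M (\<lambda>\<omega>. \<mu> \<omega> * (\<pi> s \<omega> a * (u s \<omega> a - u s \<omega> a')))"
  using integrable_prior_mult[OF assms(2) obedience_integrand_measurable[OF assms(1)]
      obedience_integrand_bounded[OF assms(1)]] .

lemma obedience_ge_l1dist:
  assumes "\<pi> \<in> schemes M" "\<mu> \<in> priors M" "\<mu>' \<in> priors M"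
  shows "obedience M \<mu>' u \<pi> s a a' \<ge> obedience M \<mu> u \<pi> s a a' - l1dist M \<mu> \<mu>'"
  using integral_prior_mult_ge_l1dist[OF assms(2,3) obedience_integrand_measurable[OF assms(1)]
      obedience_integrand_bounded[OF assms(1)]]
  by (simp add: obedience_def mult.assoc)

lemma obedience_mix_at:
  assumes "\<pi> \<in> schemes M" "\<sigma> \<in> schemes M" "\<mu> \<in> priors M"
  shows "obedience M \<mu> u (mix_at s \<delta> \<pi> \<sigma>) s a a'
    = (1 - \<delta>) * obedience M \<mu> u \<pi> s a a' + \<delta> * obedience M \<mu> u \<sigma> s a a'"
proof -
  have "\<mu> \<omega> * mix_at s \<delta> \<pi> \<sigma> s \<omega> a * (u s \<omega> a - u s \<omega> a')
      = (1 - \<delta>) * (\<mu> \<omega> * (\<pi> s \<omega> a * (u s \<omega> a - u s \<omega> a')))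
        + \<delta> * (\<mu> \<omega> * (\<sigma> s \<omega> a * (u s \<omega> a - u s \<omega> a')))" for \<omega>
    by (simp add: mix_at_def algebra_simps)
  then show ?thesis
    unfolding obedience_def
    using integrable_obedience_integrand[OF assms(1,3)] integrable_obedience_integrand[OF assms(2,3)]
    by (simp add: mult.assoc)
qed

lemma regular_D_le_one:
  fixes a a' :: 'a
  assumes "regular M u \<mu> s p0 D" "p0 > 0" "a \<noteq> a'"
  shows "D \<le> 1"
proof -
  have "Wset M u s a D \<noteq> {}"
  proof
    assume "Wset M u s a D = {}"
    then show False
      using assms(1,2) by (auto simp: regular_def dest: spec[of _ a])
  qed
  then obtain \<omega> where "\<omega> \<in> Wset M u s a D"
    by blast
  then have "\<omega> \<in> space M" "D \<le> u s \<omega> a - u s \<omega> a'"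
    using assms(3) by (auto simp: Wset_def)
  then show ?thesis
    using u_range[of \<omega> s a] u_range[of \<omega> s a'] by linarith
qed

lemma obedience_best_response_ge:
  assumes "D > 0" "a \<noteq> a'" "\<mu> \<in> priors M"
  shows "obedience M \<mu> u (best_response_scheme u) s a a'
    \<ge> D * (\<integral>\<omega>. \<mu> \<omega> * indicator (Wset M u s a D) \<omega> \<partial>M)"
proof -
  let ?W = "Wset M u s a D" and ?\<sigma> = "best_response_scheme u"
  have int_W: "integrable M (\<lambda>\<omega>. \<mu> \<omega> * indicator ?W \<omega>)"
    using Wset_in_sets by (intro integrable_prior_mult[OF assms(3), of _ 1]) auto
  have "(\<integral>\<omega>. D * (\<mu> \<omega> * indicator ?W \<omega>) \<partial>M)
      \<le> (\<integral>\<omega>. \<mu> \<omega> * (?\<sigma> s \<omega> a * (u s \<omega> a - u s \<omega> a')) \<partial>M)"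
  proof (rule integral_mono)
    show "integrable M (\<lambda>\<omega>. D * (\<mu> \<omega> * indicator ?W \<omega>))"
      using int_W by simp
    show "integrable M (\<lambda>\<omega>. \<mu> \<omega> * (?\<sigma> s \<omega> a * (u s \<omega> a - u s \<omega> a')))"
      using integrable_obedience_integrand[OF best_response_scheme_in_schemes[OF u_meas] assms(3)] .
    fix \<omega>
    assume "\<omega> \<in> space M"
    then have \<mu>_nonneg: "0 \<le> \<mu> \<omega>"
      using assms(3) by (simp add: priors_def)
    show "D * (\<mu> \<omega> * indicator ?W \<omega>) \<le> \<mu> \<omega> * (?\<sigma> s \<omega> a * (u s \<omega> a - u s \<omega> a'))"
    proof (cases "\<omega> \<in> ?W")
      case True
      then have "D \<le> u s \<omega> a - u s \<omega> a'"
        using assms(2) by (simp add: Wset_def)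
      then show ?thesis
        using True \<mu>_nonneg best_response_scheme_on_Wset[OF assms(1) True]
        by (simp add: mult.commute[of D] mult_left_mono)
    qed (simp add: \<mu>_nonneg best_response_scheme_obedient)
  qed
  then show ?thesis
    by (simp add: obedience_def mult.assoc)
qed

lemma obedience_best_response_ge_regular:
  assumes "\<mu> \<in> priors M" "\<mu>' \<in> priors M" "regular M u \<mu> s p0 D" "D > 0" "a \<noteq> a'"
  shows "obedience M \<mu>' u (best_response_scheme u) s a a' \<ge> D * (p0 - l1dist M \<mu> \<mu>')"
proof -
  let ?W = "Wset M u s a D"
  have "(\<integral>\<omega>. \<mu>' \<omega> * indicator ?W \<omega> \<partial>M) \<ge> (\<integral>\<omega>. \<mu> \<omega> * indicator ?W \<omega> \<partial>M) - l1dist M \<mu> \<mu>'"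
    using Wset_in_sets by (intro integral_prior_mult_ge_l1dist[OF assms(1,2)]) auto
  then have "(\<integral>\<omega>. \<mu>' \<omega> * indicator ?W \<omega> \<partial>M) \<ge> p0 - l1dist M \<mu> \<mu>'"
    using assms(3)[unfolded regular_def, THEN spec, of a] by linarith
  then have "D * (p0 - l1dist M \<mu> \<mu>') \<le> D * (\<integral>\<omega>. \<mu>' \<omega> * indicator ?W \<omega> \<partial>M)"
    using assms(4) by (intro mult_left_mono) auto
  then show ?thesis
    using obedience_best_response_ge[OF assms(4,5,2), of s] by linarith
qed

lemma obedience_mix_at_best_response_nonneg:
  assumes \<pi>: "\<pi> \<in> Pers M \<mu> u" and \<mu>: "\<mu> \<in> priors M" and \<mu>': "\<mu>' \<in> priors M"
    and reg: "regular M u \<mu> s p0 D" and "p0 > 0" "D > 0" "a \<noteq> a'"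
    and \<delta>: "0 \<le> \<delta>" "\<delta> \<le> 1" and close: "l1dist M \<mu> \<mu>' \<le> \<delta> * D * p0"
  shows "obedience M \<mu>' u (mix_at s \<delta> \<pi> (best_response_scheme u)) s a a' \<ge> 0"
proof -
  let ?\<sigma> = "best_response_scheme u" and ?d = "l1dist M \<mu> \<mu>'"
  have \<pi>_scheme: "\<pi> \<in> schemes M" and \<sigma>_scheme: "?\<sigma> \<in> schemes M"
    using \<pi> best_response_scheme_in_schemes[OF u_meas] by (auto simp: Pers_iff_obedience)
  have d_nonneg: "0 \<le> ?d"
    by (simp add: l1dist_def)
  have "obedience M \<mu> u \<pi> s a a' \<ge> 0"
    using \<pi> by (simp add: Pers_iff_obedience)
  then have "obedience M \<mu>' u \<pi> s a a' \<ge> - ?d"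
    using obedience_ge_l1dist[OF \<pi>_scheme \<mu> \<mu>', of s a a'] by linarith
  then have term_\<pi>: "(1 - \<delta>) * obedience M \<mu>' u \<pi> s a a' \<ge> (1 - \<delta>) * - ?d"
    using \<delta> by (intro mult_left_mono) auto
  have term_\<sigma>: "\<delta> * obedience M \<mu>' u ?\<sigma> s a a' \<ge> \<delta> * (D * (p0 - ?d))"
    using obedience_best_response_ge_regular[OF \<mu> \<mu>' reg \<open>D > 0\<close> \<open>a \<noteq> a'\<close>] \<delta>
    by (intro mult_left_mono) auto
  have "D \<le> 1"
    using regular_D_le_one[OF reg \<open>p0 > 0\<close> \<open>a \<noteq> a'\<close>] .
  then have "0 \<le> \<delta> * ?d * (1 - D)"
    using \<delta> d_nonneg by simp
  moreover have "(1 - \<delta>) * - ?d + \<delta> * (D * (p0 - ?d)) = (\<delta> * D * p0 - ?d) + \<delta> * ?d * (1 - D)"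
    by (simp add: algebra_simps)
  ultimately show ?thesis
    using obedience_mix_at[OF \<pi>_scheme \<sigma>_scheme \<mu>', of s \<delta> a a'] term_\<pi> term_\<sigma> close by linarith
qed

lemma mix_at_best_response_in_Pers:
  assumes \<pi>: "\<pi> \<in> Pers M \<mu> u" and \<mu>: "\<mu> \<in> priors M" and \<mu>': "\<mu>' \<in> priors M"
    and reg: "regular M u \<mu> s p0 D" and "p0 > 0" "D > 0"
    and \<delta>: "0 \<le> \<delta>" "\<delta> \<le> 1" and close: "l1dist M \<mu> \<mu>' \<le> \<delta> * D * p0"
  shows "mix_at s \<delta> \<pi> (best_response_scheme u) \<in> Pers M \<mu>' u"
proof -
  let ?\<sigma> = "best_response_scheme u"
  have \<sigma>: "?\<sigma> \<in> Pers M \<mu>' u"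
    using best_response_scheme_in_Pers[OF u_meas \<mu>'] .
  have "obedience M \<mu>' u (mix_at s \<delta> \<pi> ?\<sigma>) s' a a' \<ge> 0" for s' a a'
  proof -
    consider "s' \<noteq> s" | "s' = s" "a = a'" | "s' = s" "a \<noteq> a'"
      by blast
    then show ?thesis
    proof cases
      case 1
      then have "obedience M \<mu>' u (mix_at s \<delta> \<pi> ?\<sigma>) s' a a' = obedience M \<mu>' u ?\<sigma> s' a a'"
        by (simp add: obedience_def mix_at_def)
      then show ?thesis
        using \<sigma> by (simp add: Pers_iff_obedience)
    next
      case 2
      then show ?thesis
        by (simp add: obedience_def)
    next
      case 3
      then show ?thesis
        using obedience_mix_at_best_response_nonneg[OF \<pi> \<mu> \<mu>' reg \<open>p0 > 0\<close> \<open>D > 0\<close> _ \<delta> close]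
        by blast
    qed
  qed
  moreover have "mix_at s \<delta> \<pi> ?\<sigma> \<in> schemes M"
    using \<pi> \<sigma> \<delta> by (intro mix_at_in_schemes) (auto simp: Pers_iff_obedience)
  ultimately show ?thesis
    by (simp add: Pers_iff_obedience)
qed

end

lemma PersSet_l1ball_iff:
  "\<pi> \<in> PersSet M (l1ball M \<mu> \<epsilon>) u \<longleftrightarrow>
     \<pi> \<in> schemes M \<and> (\<forall>\<mu>'\<in>priors M. l1dist M \<mu> \<mu>' \<le> \<epsilon> \<longrightarrow> \<pi> \<in> Pers M \<mu>' u)"
  by (auto simp: PersSet_def l1ball_def)

lemma robust_scheme_near_optimal:
  fixes u Q :: "'s \<Rightarrow> 'w \<Rightarrow> 'a::finite \<Rightarrow> real"
  assumes u_meas: "\<And>s a. (\<lambda>\<omega>. u s \<omega> a) \<in> borel_measurable M"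
    and u_range: "\<And>s \<omega> a. \<omega> \<in> space M \<Longrightarrow> 0 \<le> u s \<omega> a \<and> u s \<omega> a \<le> 1"
    and Q_meas: "\<And>s a. (\<lambda>\<omega>. Q s \<omega> a) \<in> borel_measurable M"
    and Q_range: "\<And>s \<omega> a. \<omega> \<in> space M \<Longrightarrow> 0 \<le> Q s \<omega> a \<and> Q s \<omega> a \<le> H"
    and \<mu>: "\<mu> \<in> priors M" and reg: "regular M u \<mu> s p0 D" and "p0 > 0" "D > 0" "\<epsilon> > 0"
    and \<pi>: "\<pi> \<in> Pers M \<mu> u"
  shows "\<exists>\<pi>'\<in>PersSet M (l1ball M \<mu> \<epsilon>) u.
           pairing M Q \<mu> \<pi> s \<le> pairing M Q \<mu> \<pi>' s + H * \<epsilon> / (p0 * D)"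
proof -
  let ?\<sigma> = "best_response_scheme u"
  have bounds: "0 \<le> pairing M Q \<mu> \<rho> s \<and> pairing M Q \<mu> \<rho> s \<le> H" if "\<rho> \<in> schemes M" for \<rho>
    by (rule pairing_bounds) (use Q_meas Q_range \<mu> that in auto)
  have \<pi>_scheme: "\<pi> \<in> schemes M" and \<sigma>_scheme: "?\<sigma> \<in> schemes M"
    using \<pi> best_response_scheme_in_schemes[OF u_meas] by (auto simp: Pers_iff_obedience)
  show ?thesis
  proof (cases "\<epsilon> < p0 * D")
    case True
    define \<delta> where "\<delta> = \<epsilon> / (p0 * D)"
    have \<delta>: "0 \<le> \<delta>" "\<delta> \<le> 1" "\<epsilon> = \<delta> * D * p0"
      using True \<open>p0 > 0\<close> \<open>D > 0\<close> \<open>\<epsilon> > 0\<close> by (auto simp: \<delta>_def)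
    let ?\<pi>' = "mix_at s \<delta> \<pi> ?\<sigma>"
    have robust: "?\<pi>' \<in> PersSet M (l1ball M \<mu> \<epsilon>) u"
      using mix_at_best_response_in_Pers[where M=M and u=u, OF u_meas u_range \<pi> \<mu> _ reg \<open>p0 > 0\<close> \<open>D > 0\<close> \<delta>(1,2)]
        mix_at_in_schemes[OF \<pi>_scheme \<sigma>_scheme \<delta>(1,2)] \<delta>(3)
      by (simp add: PersSet_l1ball_iff)
    have "pairing M Q \<mu> ?\<pi>' s = (1 - \<delta>) * pairing M Q \<mu> \<pi> s + \<delta> * pairing M Q \<mu> ?\<sigma> s"
      by (rule pairing_mix_at[where H=H]) (use Q_meas Q_range \<pi>_scheme \<sigma>_scheme \<mu> in auto)
    moreover have "\<delta> * pairing M Q \<mu> \<pi> s \<le> \<delta> * H" "0 \<le> \<delta> * pairing M Q \<mu> ?\<sigma> s"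
      using bounds[OF \<pi>_scheme] bounds[OF \<sigma>_scheme] \<delta>(1) by (auto intro: mult_left_mono)
    ultimately have "pairing M Q \<mu> \<pi> s \<le> pairing M Q \<mu> ?\<pi>' s + H * \<delta>"
      by (simp add: algebra_simps)
    with robust show ?thesis
      by (auto simp: \<delta>_def)
  next
    case False
    have "?\<sigma> \<in> PersSet M (l1ball M \<mu> \<epsilon>) u"
      using best_response_scheme_in_Pers[where u=u, OF u_meas] \<sigma>_scheme by (simp add: PersSet_l1ball_iff)
    moreover have "H \<le> H * \<epsilon> / (p0 * D)"
      using False bounds[OF \<pi>_scheme] \<open>p0 > 0\<close> \<open>D > 0\<close>
      by (simp add: le_divide_eq mult_left_mono)
    then have "pairing M Q \<mu> \<pi> s \<le> pairing M Q \<mu> ?\<sigma> s + H * \<epsilon> / (p0 * D)"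
      using bounds[OF \<pi>_scheme] bounds[OF \<sigma>_scheme] by linarith
    ultimately show ?thesis
      by blast
  qed
qed

theorem mainTheorem7:
  fixes M :: "'w measure"
    and u Q :: "'s \<Rightarrow> 'w \<Rightarrow> 'a::finite \<Rightarrow> real"
    and \<mu> :: "'w \<Rightarrow> real" and s :: 's and H p0 D \<epsilon> :: real
  assumes u_meas: "\<And>s' a. (\<lambda>\<omega>. u s' \<omega> a) \<in> borel_measurable M"
    and u_range: "\<And>s' \<omega> a. \<omega> \<in> space M \<Longrightarrow> 0 \<le> u s' \<omega> a \<and> u s' \<omega> a \<le> 1"
    and Q_meas: "\<And>s' a. (\<lambda>\<omega>. Q s' \<omega> a) \<in> borel_measurable M"
    and Q_range: "\<And>s' \<omega> a. \<omega> \<in> space M \<Longrightarrow> 0 \<le> Q s' \<omega> a \<and> Q s' \<omega> a \<le> H"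
    and prior: "\<mu> \<in> priors M"
    and p0_pos: "p0 > 0" and D_pos: "D > 0"
    and reg: "regular M u \<mu> s p0 D"
    and eps: "\<epsilon> > 0"
  shows "Gap M u s \<mu> (l1ball M \<mu> \<epsilon>) Q \<le> H * \<epsilon> / (p0 * D)"
  unfolding Gap_def
proof (rule cSUP_diff_le)
  show "Pers M \<mu> u \<noteq> {}"
    using best_response_scheme_in_Pers[where u=u, OF u_meas prior] by blast
  have "pairing M Q \<mu> \<pi> s \<le> H" if "\<pi> \<in> PersSet M (l1ball M \<mu> \<epsilon>) u" for \<pi>
    using pairing_bounds[where Q=Q and H=H] Q_meas Q_range prior that
    by (auto simp: PersSet_l1ball_iff)
  then show "bdd_above ((\<lambda>\<pi>. pairing M Q \<mu> \<pi> s) ` PersSet M (l1ball M \<mu> \<epsilon>) u)"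
    by (rule bdd_aboveI2)
  show "\<exists>\<pi>'\<in>PersSet M (l1ball M \<mu> \<epsilon>) u. pairing M Q \<mu> \<pi> s \<le> pairing M Q \<mu> \<pi>' s + H * \<epsilon> / (p0 * D)"
    if "\<pi> \<in> Pers M \<mu> u" for \<pi>
    by (rule robust_scheme_near_optimal[OF u_meas u_range Q_meas Q_range prior reg p0_pos D_pos eps that])
qed

end
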